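(* Let $\frac{1}{2}\leq \alpha <1$ and let $G$ be a graph with $n$ vertices and $m$ edges. If $1\leq k\leq n-1$, then $$S_{k}(A_{\alpha}(G))\leq \frac{2\alpha km}{n}+\sqrt{\frac{k(n-k)}{n}\left(\alpha^2Z_1+2m(1-\alpha)^2-\frac{4\alpha^2m^2}{n}\right)},$$ where $Z_1$ is the first Zagreb index of $G$.
   Context: All graphs are simple and undirected. $A_{\alpha}(G)=\alpha D(G)+(1-\alpha)A(G)$, where $A(G)$ is the adjacency matrix and $D(G)$ the diagonal matrix of vertex degrees. For a real symmetric matrix $M$ with eigenvalues $\lambda_1(M)\geq\cdots\geq\lambda_n(M)$, $S_k(M)=\sum_{i=1}^k\lambda_i(M)$. The first Zagreb index $Z_1=Z_1(G)=\sum_{v\in V(G)} d_v^2$ is the sum of the squares of the vertex degrees. *)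

theory Defs
  imports "Jordan_Normal_Form.Char_Poly" Complex_Main
begin

definition simple_graph :: "nat \<Rightarrow> (nat \<Rightarrow> nat \<Rightarrow> bool) \<Rightarrow> bool" where
  "simple_graph n E \<longleftrightarrow> (\<forall>i<n. \<forall>j<n. E i j \<longleftrightarrow> E j i) \<and> (\<forall>i<n. \<not> E i i)"

definition num_edges :: "nat \<Rightarrow> (nat \<Rightarrow> nat \<Rightarrow> bool) \<Rightarrow> nat" where
  "num_edges n E = card {(i, j). i < j \<and> j < n \<and> E i j}"

definition degree :: "nat \<Rightarrow> (nat \<Rightarrow> nat \<Rightarrow> bool) \<Rightarrow> nat \<Rightarrow> nat" where
  "degree n E i = card {j. j < n \<and> E i j}"

definition adj_mat :: "nat \<Rightarrow> (nat \<Rightarrow> nat \<Rightarrow> bool) \<Rightarrow> real mat" where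
  "adj_mat n E = mat n n (\<lambda>(i, j). if E i j then 1 else 0)"

definition deg_mat :: "nat \<Rightarrow> (nat \<Rightarrow> nat \<Rightarrow> bool) \<Rightarrow> real mat" where
  "deg_mat n E = mat n n (\<lambda>(i, j). if i = j then real (degree n E i) else 0)"

definition A_alpha :: "real \<Rightarrow> nat \<Rightarrow> (nat \<Rightarrow> nat \<Rightarrow> bool) \<Rightarrow> real mat" where
  "A_alpha \<alpha> n E = \<alpha> \<cdot>\<^sub>m deg_mat n E + (1 - \<alpha>) \<cdot>\<^sub>m adj_mat n E"

definition zagreb1 :: "nat \<Rightarrow> (nat \<Rightarrow> nat \<Rightarrow> bool) \<Rightarrow> real" where
  "zagreb1 n E = (\<Sum>i<n. real (degree n E i) ^ 2)"

text \<open>Eigenvalues (with multiplicity) of a real matrix whose characteristic polynomial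
  splits over the reals (e.g. a real symmetric matrix), listed in non-increasing order
  lambda_1 >= ... >= lambda_n.\<close>
definition eigenvalues_desc :: "real mat \<Rightarrow> real list" where
  "eigenvalues_desc M = (THE es. sorted_wrt (\<ge>) es \<and> char_poly M = (\<Prod>a\<leftarrow>es. [:- a, 1:]))"

definition S_k :: "nat \<Rightarrow> real mat \<Rightarrow> real" where
  "S_k k M = sum_list (take k (eigenvalues_desc M))"

end

(*
  A_alpha(G) is real symmetric, so its characteristic polynomial splits over the reals, and
  Schur triangularisation turns power sums of its eigenvalues into traces of its powers:
  sum lambda_i = tr A_alpha = 2 alpha m and sum lambda_i^2 = tr (A_alpha^2) = alpha^2 Z_1 + 2m (1-alpha)^2.
  For any real list with sum s and sum of squares q, Cauchy-Schwarz applied separately to the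
  first k and to the last n - k entries bounds the sum a of the first k entries by
  (a - k s / n)^2 <= k (n - k) / n * (q - s^2 / n).
*)

theory Submission
  imports Defs "Jordan_Normal_Form.Schur_Decomposition" "HOL-Analysis.Convex"
begin

lemma degree_prod_linear_factors:
  fixes xs :: "'a::idom list"
  shows "Polynomial.degree (\<Prod>a\<leftarrow>xs. [:- a, 1:]) = length xs"
proof (induction xs)
  case (Cons x xs)
  have "(\<Prod>a\<leftarrow>xs. [:- a, 1:]) \<noteq> 0"
    by (auto simp: prod_list_zero_iff)
  then have "Polynomial.degree ([:- x, 1:] * (\<Prod>a\<leftarrow>xs. [:- a, 1:])) = 1 + length xs"
    using Cons.IH by (subst degree_mult_eq) auto
  then show ?case
    by simp
qed simp

lemma prod_mset_linear_factors_inj: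
  fixes A B :: "'a::idom multiset"
  assumes "(\<Prod>a\<in>#A. [:- a, 1:]) = (\<Prod>a\<in>#B. [:- a, 1:])"
  shows "A = B"
  using assms
proof (induction A arbitrary: B)
  case empty
  have "b \<notin># B" for b
  proof
    assume "b \<in># B"
    then have "poly (\<Prod>a\<in>#B. [:- a, 1:]) b = 0"
      by (auto simp: poly_prod_mset prod_mset_zero_iff)
    with empty show False
      by simp
  qed
  then show ?case
    by (simp add: multiset_eq_iff count_eq_zero_iff)
next
  case (add x A)
  have "poly (\<Prod>a\<in>#B. [:- a, 1:]) x = 0"
    using add.prems[symmetric] by (simp add: poly_prod_mset)
  then have "x \<in># B"
    by (auto simp: poly_prod_mset prod_mset_zero_iff)
  then obtain B' where B: "B = add_mset x B'"
    by (blast dest: multi_member_split)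
  have "[:- x, 1:] * (\<Prod>a\<in>#A. [:- a, 1:]) = [:- x, 1:] * (\<Prod>a\<in>#B'. [:- a, 1:])"
    using add.prems unfolding B by (simp only: image_mset_add_mset prod_mset.add_mset)
  then have "(\<Prod>a\<in>#A. [:- a, 1:]) = (\<Prod>a\<in>#B'. [:- a, 1:])"
    by (subst (asm) mult_left_cancel) simp_all
  then show ?case
    using add.IH B by simp
qed

lemma prod_list_linear_factors_eq_imp_mset_eq:
  fixes xs ys :: "'a::idom list"
  assumes "(\<Prod>a\<leftarrow>xs. [:- a, 1:]) = (\<Prod>a\<leftarrow>ys. [:- a, 1:])"
  shows "mset xs = mset ys"
  using assms by (intro prod_mset_linear_factors_inj) (simp add: prod_mset_prod_list flip: mset_map)

lemma sorted_wrt_ge_mset_eq_imp_eq: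
  fixes xs ys :: "'a::linorder list"
  assumes "sorted_wrt (\<ge>) xs" "sorted_wrt (\<ge>) ys" "mset xs = mset ys"
  shows "xs = ys"
proof -
  have "sort (rev xs) = rev xs" "sort (rev xs) = rev ys"
    using assms by (simp_all add: sorted_wrt_rev properties_for_sort)
  then show ?thesis
    by simp
qed

section \<open>Eigenvalues of real symmetric matrices\<close>

lemma eigenvalues_desc_eqI:
  assumes "sorted_wrt (\<ge>) es" and "char_poly M = (\<Prod>a\<leftarrow>es. [:- a, 1:])"
  shows "eigenvalues_desc M = es"
  unfolding eigenvalues_desc_def
proof (rule the_equality)
  fix fs
  assume "sorted_wrt (\<ge>) fs \<and> char_poly M = (\<Prod>a\<leftarrow>fs. [:- a, 1:])"
  with assms show "fs = es"
    by (metis prod_list_linear_factors_eq_imp_mset_eq sorted_wrt_ge_mset_eq_imp_eq)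
qed (use assms in blast)

lemma real_symmetric_eigenvalue_real:
  fixes M :: "real mat" and a :: complex
  assumes M: "M \<in> carrier_mat n n" and sym: "transpose_mat M = M"
    and "eigenvalue (map_mat complex_of_real M) a"
  shows "a \<in> \<real>"
proof -
  let ?M = "map_mat complex_of_real M"
  obtain v where "eigenvector ?M v a"
    using \<open>eigenvalue ?M a\<close> unfolding eigenvalue_def by blast
  with M have v: "v \<in> carrier_vec n" and "v \<noteq> 0\<^sub>v n" and eigen: "?M *\<^sub>v v = a \<cdot>\<^sub>v v"
    unfolding eigenvector_def by auto
  have M_sym: "M $$ (i, j) = M $$ (j, i)" if "i < n" "j < n" for i j
    using that M index_transpose_mat(1)[of j M i] by (simp add: sym)
  have row_eq: "(\<Sum>j<n. complex_of_real (M $$ (i, j)) * v $ j) = a * v $ i" if "i < n" for i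
  proof -
    have "(?M *\<^sub>v v) $ i = (a \<cdot>\<^sub>v v) $ i"
      by (simp only: eigen)
    then show ?thesis
      using that M v by (simp add: mult_mat_vec_def scalar_prod_def row_def atLeast0LessThan)
  qed
  \<comment> \<open>S = v* M v is real because M is real symmetric, while S = a |v|^2.\<close>
  define S where "S = (\<Sum>i<n. \<Sum>j<n. cnj (v $ i) * complex_of_real (M $$ (i, j)) * v $ j)"
  define N where "N = (\<Sum>i<n. (cmod (v $ i))^2)"
  have S_eq: "S = a * N"
  proof -
    have "S = (\<Sum>i<n. cnj (v $ i) * (\<Sum>j<n. complex_of_real (M $$ (i, j)) * v $ j))"
      unfolding S_def by (simp add: sum_distrib_left mult.assoc)
    also have "\<dots> = (\<Sum>i<n. a * (cnj (v $ i) * v $ i))"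
      by (intro sum.cong refl) (simp add: row_eq)
    finally show ?thesis
      unfolding N_def of_real_sum
      by (simp add: sum_distrib_left complex_norm_square mult.commute del: of_real_power)
  qed
  have "cnj S = (\<Sum>i<n. \<Sum>j<n. v $ i * complex_of_real (M $$ (i, j)) * cnj (v $ j))"
    unfolding S_def by (simp add: cnj_sum)
  also have "\<dots> = (\<Sum>j<n. \<Sum>i<n. v $ i * complex_of_real (M $$ (i, j)) * cnj (v $ j))"
    by (rule sum.swap)
  also have "\<dots> = S"
    unfolding S_def by (intro sum.cong refl) (simp add: M_sym mult_ac)
  finally have "cnj S = S" .
  obtain i where "i < n" "v $ i \<noteq> 0"
    using v \<open>v \<noteq> 0\<^sub>v n\<close> by (metis eq_vecI carrier_vecD index_zero_vec)
  then have "N > 0"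
    unfolding N_def by (intro sum_pos2[of _ i]) auto
  moreover have "cnj a * N = a * N"
    using S_eq \<open>cnj S = S\<close> by (metis complex_cnj_complex_of_real complex_cnj_mult)
  ultimately show ?thesis
    by (simp add: Reals_cnj_iff)
qed

lemma real_symmetric_char_poly_splits:
  fixes M :: "real mat"
  assumes M: "M \<in> carrier_mat n n" and sym: "transpose_mat M = M"
  shows "\<exists>es. char_poly M = (\<Prod>a\<leftarrow>es. [:- a, 1:])"
proof -
  let ?M = "map_mat complex_of_real M"
  have M': "?M \<in> carrier_mat n n"
    using M by simp
  obtain as where as: "char_poly ?M = (\<Prod>a\<leftarrow>as. [:- a, 1:])"
    using char_poly_factorized[OF M'] by blast
  have real: "a = complex_of_real (Re a)" if "a \<in> set as" for a
  proof -
    have "poly (char_poly ?M) a = 0"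
      using that unfolding as by (simp add: poly_prod_list prod_list_zero_iff)
    then have "eigenvalue ?M a"
      using eigenvalue_root_char_poly[OF M'] by simp
    then show ?thesis
      using real_symmetric_eigenvalue_real[OF M sym] by (simp add: complex_is_Real_iff complex_eq_iff)
  qed
  interpret of_real_poly: map_poly_inj_comm_ring_hom complex_of_real ..
  have "map_poly complex_of_real (char_poly M) = char_poly ?M"
    by (rule of_real_hom.char_poly_hom[OF M, symmetric])
  also have "\<dots> = map_poly complex_of_real (\<Prod>a\<leftarrow>map Re as. [:- a, 1:])"
    unfolding as using real by (induction as) (auto simp: hom_distribs)
  finally show ?thesis
    by (blast dest: of_real_poly.injectivity)
qed

lemma char_poly_eigenvalues_desc:
  fixes M :: "real mat"
  assumes "M \<in> carrier_mat n n" and "transpose_mat M = M"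
  shows "char_poly M = (\<Prod>a\<leftarrow>eigenvalues_desc M. [:- a, 1:])"
proof -
  obtain es where es: "char_poly M = (\<Prod>a\<leftarrow>es. [:- a, 1:])"
    using real_symmetric_char_poly_splits[OF assms] by blast
  have sorted_factors: "(\<Prod>a\<leftarrow>rev (sort es). [:- a, 1:]) = (\<Prod>a\<leftarrow>es. [:- a, 1:])"
    unfolding prod_mset_prod_list[symmetric] mset_map by simp
  then have "eigenvalues_desc M = rev (sort es)"
    using es by (intro eigenvalues_desc_eqI) (simp_all add: sorted_wrt_rev)
  with es sorted_factors show ?thesis
    by simp
qed

section \<open>Traces and power sums of eigenvalues\<close>

definition mat_trace :: "'a::comm_monoid_add mat \<Rightarrow> 'a" where
  "mat_trace A = (\<Sum>i<dim_row A. A $$ (i, i))"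

lemma mat_trace_mult:
  assumes "A \<in> carrier_mat n m" and "B \<in> carrier_mat m n"
  shows "mat_trace (A * B) = (\<Sum>i<n. \<Sum>j<m. A $$ (i, j) * B $$ (j, i))"
  using assms unfolding mat_trace_def by (simp add: scalar_prod_def atLeast0LessThan)

lemma mat_trace_mult_comm:
  fixes A B :: "'a::comm_semiring_0 mat"
  assumes "A \<in> carrier_mat n m" and "B \<in> carrier_mat m n"
  shows "mat_trace (A * B) = mat_trace (B * A)"
  unfolding mat_trace_mult[OF assms] mat_trace_mult[OF assms(2,1)]
  by (subst sum.swap) (simp add: mult.commute)

lemma mat_trace_similar_mat_wit:
  fixes A B :: "'a::comm_semiring_1 mat"
  assumes "similar_mat_wit A B P Q"
  shows "mat_trace A = mat_trace B"
proof -
  obtain n where A: "A \<in> carrier_mat n n"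
    using similar_mat_witD[OF refl assms] by blast
  note wit = similar_mat_witD2[OF A assms]
  have "mat_trace A = mat_trace (P * (B * Q))"
    using wit by (simp add: assoc_mult_mat[of _ n n _ n _ n])
  also have "\<dots> = mat_trace (B * Q * P)"
    using wit by (intro mat_trace_mult_comm) auto
  also have "\<dots> = mat_trace B"
    using wit by (simp add: assoc_mult_mat[of _ n n _ n _ n])
  finally show ?thesis .
qed

lemma upper_triangular_mult_index:
  fixes B C :: "'a::semiring_0 mat"
  assumes B: "B \<in> carrier_mat n n" "upper_triangular B" and C: "C \<in> carrier_mat n n" "upper_triangular C"
    and ji: "j \<le> i" and i: "i < n"
  shows "(B * C) $$ (i, j) = (if i = j then B $$ (i, i) * C $$ (i, i) else 0)"
proof -
  have vanish: "B $$ (i, l) * C $$ (l, j) = 0" if "l < n" "l \<noteq> i" for l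
  proof (cases "l < i")
    case True
    then show ?thesis
      using B i by (simp add: upper_triangularD)
  next
    case False
    then have "j < l"
      using that ji by simp
    then show ?thesis
      using C \<open>l < n\<close> by (simp add: upper_triangularD)
  qed
  have "(B * C) $$ (i, j) = (\<Sum>l<n. B $$ (i, l) * C $$ (l, j))"
    using B C ji i by (simp add: scalar_prod_def atLeast0LessThan)
  also have "\<dots> = (\<Sum>l\<in>{i}. B $$ (i, l) * C $$ (l, j))"
    by (rule sum.mono_neutral_right) (use i vanish in auto)
  also have "\<dots> = (if i = j then B $$ (i, i) * C $$ (i, i) else 0)"
    using C ji i by (auto simp: upper_triangularD)
  finally show ?thesis .
qed

lemma upper_triangular_mult:
  fixes B C :: "'a::semiring_0 mat"
  assumes "B \<in> carrier_mat n n" "upper_triangular B" "C \<in> carrier_mat n n" "upper_triangular C"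
  shows "upper_triangular (B * C)"
  using assms upper_triangular_mult_index[OF assms] by (intro upper_triangularI) auto

lemma upper_triangular_pow_mat:
  fixes B :: "'a::semiring_1 mat"
  assumes "B \<in> carrier_mat n n" "upper_triangular B"
  shows "upper_triangular (B ^\<^sub>m k)"
proof (induction k)
  case (Suc k)
  then show ?case
    using upper_triangular_mult[OF pow_carrier_mat[OF assms(1)] Suc.IH assms] by simp
qed simp

lemma upper_triangular_pow_mat_diag:
  fixes B :: "'a::semiring_1 mat"
  assumes B: "B \<in> carrier_mat n n" "upper_triangular B" and i: "i < n"
  shows "(B ^\<^sub>m k) $$ (i, i) = B $$ (i, i) ^ k"
proof (induction k)
  case 0
  then show ?case
    using B i by simp
next
  case (Suc k)
  have "(B ^\<^sub>m k * B) $$ (i, i) = (B ^\<^sub>m k) $$ (i, i) * B $$ (i, i)"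
    using upper_triangular_mult_index[OF _ upper_triangular_pow_mat[OF B] B] B i by simp
  then show ?case
    using Suc.IH by (simp add: power_commutes)
qed

lemma sum_list_power_eq_mat_trace_pow_mat:
  fixes M :: "'a::conjugatable_ordered_field mat"
  assumes M: "M \<in> carrier_mat n n" and char_poly: "char_poly M = (\<Prod>a\<leftarrow>es. [:- a, 1:])"
  shows "sum_list (map (\<lambda>x. x ^ k) es) = mat_trace (M ^\<^sub>m k)"
proof -
  obtain B P Q where "schur_decomposition M es = (B, P, Q)"
    by (cases "schur_decomposition M es") auto
  from schur_decomposition[OF M char_poly this]
  have wit: "similar_mat_wit M B P Q" and B: "upper_triangular B" "diag_mat B = es"
    by auto
  have B_carrier: "B \<in> carrier_mat n n"
    using similar_mat_witD2[OF M wit] by simp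
  have "mat_trace (M ^\<^sub>m k) = mat_trace (B ^\<^sub>m k)"
    by (rule mat_trace_similar_mat_wit[OF similar_mat_wit_pow[OF wit]])
  also have "\<dots> = (\<Sum>i<n. B $$ (i, i) ^ k)"
    unfolding mat_trace_def using B_carrier B
    by (simp add: upper_triangular_pow_mat_diag)
  also have "\<dots> = sum_list (map (\<lambda>x. x ^ k) es)"
    unfolding B(2)[symmetric] diag_mat_def using B_carrier
    by (simp add: sum_set_upt_conv_sum_list_nat[symmetric] atLeast0LessThan)
  finally show ?thesis ..
qed

lemma real_symmetric_eigenvalues_desc:
  fixes M :: "real mat"
  assumes M: "M \<in> carrier_mat n n" and sym: "transpose_mat M = M"
  shows "length (eigenvalues_desc M) = n"
    and "sum_list (eigenvalues_desc M) = mat_trace M"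
    and "sum_list (map (\<lambda>x. x^2) (eigenvalues_desc M)) = mat_trace (M * M)"
proof -
  note char_poly = char_poly_eigenvalues_desc[OF M sym]
  show "length (eigenvalues_desc M) = n"
    using degree_monic_char_poly[OF M] unfolding char_poly degree_prod_linear_factors by simp
  show "sum_list (eigenvalues_desc M) = mat_trace M"
    using sum_list_power_eq_mat_trace_pow_mat[OF M char_poly, of 1] M by simp
  show "sum_list (map (\<lambda>x. x^2) (eigenvalues_desc M)) = mat_trace (M * M)"
    using sum_list_power_eq_mat_trace_pow_mat[OF M char_poly, of 2] M by (simp add: numeral_2_eq_2)
qed

lemma sum_degree_eq_twice_num_edges:
  assumes "simple_graph n E"
  shows "(\<Sum>i<n. degree n E i) = 2 * num_edges n E"
proof -
  let ?S = "SIGMA i:{..<n}. {j. j < n \<and> E i j}"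
  let ?L = "{(i, j). i < j \<and> j < n \<and> E i j}"
  let ?U = "{(i, j). j < i \<and> i < n \<and> E i j}"
  have finite: "finite ?L" "finite ?U"
    by (auto intro: finite_subset[of _ "{..<n} \<times> {..<n}"])
  have "(\<Sum>i<n. degree n E i) = card ?S"
    unfolding degree_def by (subst card_SigmaI) auto
  also have "?S = ?L \<union> ?U"
    using assms unfolding simple_graph_def by (auto simp: linorder_neq_iff) (metis not_less_iff_gr_or_eq)
  also have "card (?L \<union> ?U) = card ?L + card ?U"
    by (rule card_Un_disjoint[OF finite]) auto
  also have "card ?U = card ?L"
    by (rule bij_betw_same_card[of "\<lambda>(i, j). (j, i)"], rule bij_betwI[of _ _ _ "\<lambda>(i, j). (j, i)"])
      (use assms in \<open>auto simp: simple_graph_def\<close>)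
  finally show ?thesis
    unfolding num_edges_def by simp
qed

lemma degree_eq_sum_of_bool: "real (degree n E i) = (\<Sum>j<n. of_bool (E i j))"
proof -
  have "{..<n} \<inter> {j. E i j} = {j. j < n \<and> E i j}"
    by auto
  then show ?thesis
    unfolding degree_def by (simp add: sum_of_bool_eq)
qed

lemma A_alpha_carrier: "A_alpha \<alpha> n E \<in> carrier_mat n n"
  unfolding A_alpha_def deg_mat_def adj_mat_def by auto

lemma A_alpha_index:
  assumes "i < n" and "j < n"
  shows "A_alpha \<alpha> n E $$ (i, j) =
    (if i = j then \<alpha> * real (degree n E i) else 0) + (if E i j then 1 - \<alpha> else 0)"
  using assms unfolding A_alpha_def deg_mat_def adj_mat_def by auto

lemma transpose_A_alpha:
  assumes "simple_graph n E"
  shows "transpose_mat (A_alpha \<alpha> n E) = A_alpha \<alpha> n E"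
  using assms A_alpha_carrier[of \<alpha> n E]
  by (intro eq_matI) (auto simp: A_alpha_index simple_graph_def)

lemma mat_trace_A_alpha:
  assumes "simple_graph n E"
  shows "mat_trace (A_alpha \<alpha> n E) = 2 * \<alpha> * real (num_edges n E)"
proof -
  have "mat_trace (A_alpha \<alpha> n E) = (\<Sum>i<n. \<alpha> * real (degree n E i))"
    unfolding mat_trace_def using assms A_alpha_carrier[of \<alpha> n E]
    by (intro sum.cong) (auto simp: A_alpha_index simple_graph_def)
  also have "\<dots> = \<alpha> * real (\<Sum>i<n. degree n E i)"
    by (simp add: sum_distrib_left)
  finally show ?thesis
    by (simp add: sum_degree_eq_twice_num_edges[OF assms])
qed

lemma mat_trace_A_alpha_square:
  assumes "simple_graph n E"
  shows "mat_trace (A_alpha \<alpha> n E * A_alpha \<alpha> n E) =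
    \<alpha>^2 * zagreb1 n E + 2 * real (num_edges n E) * (1 - \<alpha>)^2"
proof -
  let ?A = "A_alpha \<alpha> n E"
  have row: "(\<Sum>j<n. ?A $$ (i, j) * ?A $$ (j, i)) =
      \<alpha>^2 * real (degree n E i)^2 + (1 - \<alpha>)^2 * real (degree n E i)"
    if i: "i < n" for i
  proof -
    have "?A $$ (i, j) * ?A $$ (j, i) =
        (if j = i then (\<alpha> * real (degree n E i))^2 else 0) + (1 - \<alpha>)^2 * of_bool (E i j)"
      if "j < n" for j
      using assms i that unfolding simple_graph_def by (auto simp: A_alpha_index power2_eq_square)
    then have "(\<Sum>j<n. ?A $$ (i, j) * ?A $$ (j, i)) =
        (\<Sum>j<n. (if j = i then (\<alpha> * real (degree n E i))^2 else 0) + (1 - \<alpha>)^2 * of_bool (E i j))"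
      by simp
    also have "\<dots> = (\<alpha> * real (degree n E i))^2 + (1 - \<alpha>)^2 * real (degree n E i)"
      using i by (simp add: sum.distrib degree_eq_sum_of_bool sum_distrib_left)
    finally show ?thesis
      by (simp add: power_mult_distrib)
  qed
  have "mat_trace (?A * ?A) = (\<Sum>i<n. \<alpha>^2 * real (degree n E i)^2 + (1 - \<alpha>)^2 * real (degree n E i))"
    unfolding mat_trace_mult[OF A_alpha_carrier A_alpha_carrier] by (simp add: row)
  also have "\<dots> = \<alpha>^2 * zagreb1 n E + (1 - \<alpha>)^2 * real (\<Sum>i<n. degree n E i)"
    unfolding zagreb1_def by (simp add: sum.distrib sum_distrib_left)
  finally show ?thesis
    by (simp add: sum_degree_eq_twice_num_edges[OF assms])
qed

section \<open>Sum of the first k entries of a list\<close>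

lemma sum_list_squared_le:
  fixes xs :: "real list"
  shows "(sum_list xs)^2 \<le> real (length xs) * sum_list (map (\<lambda>x. x^2) xs)"
  using sum_squared_le_sum_of_squares[of "(!) xs" "{..<length xs}"]
  by (simp add: sum_list_sum_nth atLeast0LessThan mult.commute)

lemma split_deviation_squared_le:
  fixes a b p q K L :: real
  assumes K: "0 < K" and L: "0 < L" and a: "a^2 \<le> K * p" and b: "b^2 \<le> L * q"
  shows "(a - K * (a + b) / (K + L))^2 \<le> K * L / (K + L) * (p + q - (a + b)^2 / (K + L))"
proof -
  have deviation: "a - K * (a + b) / (K + L) = (L * a - K * b) / (K + L)"
    using K L by (simp add: field_simps)
  have gap: "a^2 / K + b^2 / L - (a + b)^2 / (K + L) = (L * a - K * b)^2 / (K * L * (K + L))"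
    using K L by (simp add: divide_simps) (simp add: power2_eq_square algebra_simps)
  have "(a - K * (a + b) / (K + L))^2 = K * L / (K + L) * (a^2 / K + b^2 / L - (a + b)^2 / (K + L))"
    unfolding deviation gap using K L by (simp add: power_divide divide_simps power2_eq_square)
  also have "\<dots> \<le> K * L / (K + L) * (p + q - (a + b)^2 / (K + L))"
  proof (rule mult_left_mono)
    have "a^2 / K \<le> p" "b^2 / L \<le> q"
      using K L a b by (simp_all add: pos_divide_le_eq mult.commute)
    then show "a^2 / K + b^2 / L - (a + b)^2 / (K + L) \<le> p + q - (a + b)^2 / (K + L)"
      by simp
  qed (use K L in simp)
  finally show ?thesis .
qed

lemma sum_take_le_mean_plus_sqrt:
  fixes xs :: "real list"
  assumes n: "length xs = n" and k: "0 < k" "k < n"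
  shows "sum_list (take k xs) \<le> real k * sum_list xs / real n
    + sqrt (real k * (real n - real k) / real n *
        (sum_list (map (\<lambda>x. x^2) xs) - (sum_list xs)^2 / real n))"
proof -
  define a where "a = sum_list (take k xs)"
  define b where "b = sum_list (drop k xs)"
  define p where "p = sum_list (map (\<lambda>x. x^2) (take k xs))"
  define q where "q = sum_list (map (\<lambda>x. x^2) (drop k xs))"
  have sums: "sum_list xs = a + b" "sum_list (map (\<lambda>x. x^2) xs) = p + q"
    unfolding a_def b_def p_def q_def by (simp_all flip: sum_list_append map_append)
  have "a^2 \<le> real k * p"
    using sum_list_squared_le[of "take k xs"] n k unfolding a_def p_def by simp
  moreover have "b^2 \<le> (real n - real k) * q"
    using sum_list_squared_le[of "drop k xs"] n k unfolding b_def q_def by (simp add: of_nat_diff)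
  ultimately have "(a - real k * (a + b) / real n)^2
      \<le> real k * (real n - real k) / real n * (p + q - (a + b)^2 / real n)"
    using split_deviation_squared_le[of "real k" "real n - real k"] k by simp
  then have "a - real k * (a + b) / real n
      \<le> sqrt (real k * (real n - real k) / real n * (p + q - (a + b)^2 / real n))"
    by (rule real_le_rsqrt)
  then show ?thesis
    unfolding sums by (simp add: a_def)
qed

theorem theorem3p2:
  fixes \<alpha> :: real and n k :: nat and E :: "nat \<Rightarrow> nat \<Rightarrow> bool"
  assumes "1/2 \<le> \<alpha>" and "\<alpha> < 1"
    and "simple_graph n E"
    and "1 \<le> k" and "k \<le> n - 1"
  shows "S_k k (A_alpha \<alpha> n E) \<le>
    2 * \<alpha> * real k * real (num_edges n E) / real n
    + sqrt (real k * (real n - real k) / real n *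
        (\<alpha>^2 * zagreb1 n E + 2 * real (num_edges n E) * (1 - \<alpha>)^2
         - 4 * \<alpha>^2 * real (num_edges n E)^2 / real n))"
proof -
  let ?A = "A_alpha \<alpha> n E"
  note spectrum =
    real_symmetric_eigenvalues_desc[OF A_alpha_carrier transpose_A_alpha[OF \<open>simple_graph n E\<close>]]
  have "S_k k ?A = sum_list (take k (eigenvalues_desc ?A))"
    unfolding S_k_def ..
  also have "\<dots> \<le> real k * mat_trace ?A / real n
      + sqrt (real k * (real n - real k) / real n * (mat_trace (?A * ?A) - (mat_trace ?A)^2 / real n))"
    using sum_take_le_mean_plus_sqrt[OF spectrum(1)] assms(4,5) unfolding spectrum(2,3) by simp
  finally show ?thesis
    unfolding mat_trace_A_alpha[OF assms(3)] mat_trace_A_alpha_square[OF assms(3)]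
    by (simp add: power_mult_distrib mult_ac)
qed
end
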